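(* In the standing setting, let $(A,B,R,\sigma)$ be a context with associated Boolean context $(A,B,R^B)$. For all $X\subseteq B$ and $Y\subseteq A$: $(\chi_X,\chi_Y)\in\mathcal F_N$ if and only if $(X,Y)\in\mathcal C_N$.
   Context: Adjoint triple: for posets $(P_1,\le_1),(P_2,\le_2),(P_3,\le_3)$, maps $\&\colon P_1\times P_2\to P_3$, $\swarrow\colon P_3\times P_2\to P_1$, $\nwarrow\colon P_3\times P_1\to P_2$ with $x\le_1 z\swarrow y \iff x\,\&\,y\le_3 z \iff y\le_2 z\nwarrow x$ for all $x,y,z$. For lower-bounded posets, $\&$ has zero-divisors if there are $x\ne\bot_1$, $y\neq\bot_2$ with $x\,\&\,y=\bot_3$. Standing setting: $(L_1,\preceq_1,\bot_1,\top_1)$ and $(L_2,\preceq_2,\bot_2,\top_2)$ are complete lattices and $(P,\le,\bot,\top)$ is a bounded poset. A multi-adjoint frame consists of adjoint triples $(\&_i,\swarrow^i,\nwarrow_i)$, $i=1,\dots,n$, with respect to $L_1,L_2,P$; a property-oriented frame consists of adjoint triples $(\&^p_j,\swarrow_p^j,\nwarrow^p_j)$, $j=1,\dots,m$, with respect to $P,L_2,L_1$; an object-oriented frame consists of adjoint triples $(\&^o_k,\swarrow_o^k,\nwarrow^o_k)$, $k=1,\dots,s$, with respect to $L_1,P,L_2$. All conjunctors $\&_i,\&^p_j,\&^o_k$ have no zero-divisors. A context $(A,B,R,\sigma)$ consists of non-empty sets $A,B$, $R\colon A\times B\to P$, and maps $\sigma,\sigma_p,\sigma_o$ from $A\times B$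 to the index sets of the three frames. Fuzzy necessity operators: $g^{\uparrow_N}(a)=\inf\{g(b)\swarrow_o^{\sigma_o(a,b)}R(a,b)\mid b\in B\}$ for $g\in L_2^B$, and $f^{\downarrow^N}(b)=\inf\{f(a)\nwarrow^p_{\sigma_p(a,b)}R(a,b)\mid a\in A\}$ for $f\in L_1^A$. Associated Boolean context $(A,B,R^B)$: $R^B(a,b)=1$ if $R(a,b)\ne\bot$ and $0$ otherwise. Crisp necessity operators: for $X\subseteq B$, $X^{\uparrow_N}=\{a\in A\mid \forall b\in B,\ R^B(a,b)=1\Rightarrow b\in X\}$; for $Y\subseteq A$, $Y^{\downarrow^N}=\{b\in B\mid\forall a\in A,\ R^B(a,b)=1\Rightarrow a\in Y\}$. For $X\subseteq B$, $\chi_X\in L_2^B$ takes value $\top_2$ on $X$ and $\bot_2$ elsewhere; for $Y\subseteq A$, $\chi_Y\in L_1^A$ takes value $\top_1$ on $Y$ and $\bot_1$ elsewhere. $\mathcal C_N=\{(X,Y)\mid X\subseteq B,\ Y\subseteq A,\ X^{\uparrow_N}=Y,\ Y^{\downarrow^N}=X\}$ (crisp operators) and $\mathcal F_N=\{(g,f)\mid g\in L_2^B,\ f\in L_1^A,\ g^{\uparrow_N}=f,\ f^{\downarrow^N}=g\}$ (fuzzy operators). *)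

theory Defs
  imports Main
begin

definition adjoint_triple ::
  "('x::order \<Rightarrow> 'y::order \<Rightarrow> 'z::order) \<Rightarrow> ('z \<Rightarrow> 'y \<Rightarrow> 'x) \<Rightarrow> ('z \<Rightarrow> 'x \<Rightarrow> 'y) \<Rightarrow> bool" where
  "adjoint_triple cnj sw nw \<longleftrightarrow>
     (\<forall>x y z. (x \<le> sw z y \<longleftrightarrow> cnj x y \<le> z) \<and> (cnj x y \<le> z \<longleftrightarrow> y \<le> nw z x))"

definition no_zero_divisors ::
  "('x::order_bot \<Rightarrow> 'y::order_bot \<Rightarrow> 'z::order_bot) \<Rightarrow> bool" where
  "no_zero_divisors cnj \<longleftrightarrow> \<not> (\<exists>x y. x \<noteq> bot \<and> y \<noteq> bot \<and> cnj x y = bot)"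

text \<open>Fuzzy necessity operators. g in L2^B, f in L1^A; A, B are the (nonempty) types.\<close>
definition up_N ::
  "(nat \<Rightarrow> 'b::complete_lattice \<Rightarrow> 'c \<Rightarrow> 'a::complete_lattice) \<Rightarrow> ('o \<Rightarrow> 'p \<Rightarrow> nat)
    \<Rightarrow> ('o \<Rightarrow> 'p \<Rightarrow> 'c) \<Rightarrow> ('p \<Rightarrow> 'b) \<Rightarrow> ('o \<Rightarrow> 'a)" where
  "up_N sw_o sigma_o R g = (\<lambda>a. INF b. sw_o (sigma_o a b) (g b) (R a b))"

definition down_N ::
  "(nat \<Rightarrow> 'a::complete_lattice \<Rightarrow> 'c \<Rightarrow> 'b::complete_lattice) \<Rightarrow> ('o \<Rightarrow> 'p \<Rightarrow> nat)
    \<Rightarrow> ('o \<Rightarrow> 'p \<Rightarrow> 'c) \<Rightarrow> ('o \<Rightarrow> 'a) \<Rightarrow> ('p \<Rightarrow> 'b)" where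
  "down_N nw_p sigma_p R f = (\<lambda>b. INF a. nw_p (sigma_p a b) (f a) (R a b))"

definition F_N ::
  "(nat \<Rightarrow> 'b::complete_lattice \<Rightarrow> 'c \<Rightarrow> 'a::complete_lattice) \<Rightarrow> ('o \<Rightarrow> 'p \<Rightarrow> nat)
   \<Rightarrow> (nat \<Rightarrow> 'a \<Rightarrow> 'c \<Rightarrow> 'b) \<Rightarrow> ('o \<Rightarrow> 'p \<Rightarrow> nat) \<Rightarrow> ('o \<Rightarrow> 'p \<Rightarrow> 'c)
   \<Rightarrow> (('p \<Rightarrow> 'b) \<times> ('o \<Rightarrow> 'a)) set" where
  "F_N sw_o sigma_o nw_p sigma_p R =
     {(g, f). up_N sw_o sigma_o R g = f \<and> down_N nw_p sigma_p R f = g}"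

text \<open>Associated Boolean context: R^B a b = 1 iff R a b \<noteq> bot (1 encoded as True).\<close>
definition boolean_context :: "('o \<Rightarrow> 'p \<Rightarrow> 'c::bot) \<Rightarrow> 'o \<Rightarrow> 'p \<Rightarrow> bool" where
  "boolean_context R = (\<lambda>a b. R a b \<noteq> bot)"

definition crisp_up :: "('o \<Rightarrow> 'p \<Rightarrow> bool) \<Rightarrow> 'p set \<Rightarrow> 'o set" where
  "crisp_up RB X = {a. \<forall>b. RB a b \<longrightarrow> b \<in> X}"

definition crisp_down :: "('o \<Rightarrow> 'p \<Rightarrow> bool) \<Rightarrow> 'o set \<Rightarrow> 'p set" where
  "crisp_down RB Y = {b. \<forall>a. RB a b \<longrightarrow> a \<in> Y}"

definition C_N :: "('o \<Rightarrow> 'p \<Rightarrow> bool) \<Rightarrow> ('p set \<times> 'o set) set" where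
  "C_N RB = {(X, Y). crisp_up RB X = Y \<and> crisp_down RB Y = X}"

definition chi :: "'x set \<Rightarrow> 'x \<Rightarrow> 'l::{bot,top}" where
  "chi S = (\<lambda>x. if x \<in> S then top else bot)"

end

theory Submission
  imports Defs
begin

text \<open>On the values \<open>\<bottom>, \<top>\<close> the implications of an adjoint triple without zero divisors
  behave like Boolean implication: \<open>\<top> \<swarrow> r = \<top>\<close>, \<open>\<bottom> \<swarrow> \<bottom> = \<top>\<close> and \<open>\<bottom> \<swarrow> r = \<bottom>\<close> for
  \<open>r \<noteq> \<bottom>\<close>. Hence the fuzzy necessity operators map characteristic functions to the
  characteristic functions of the crisp necessity operators of the Boolean context, and
  the theorem follows because \<open>\<chi>\<close> is injective once \<open>\<bottom> \<noteq> \<top>\<close>.\<close>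

lemma adjoint_triple_swap:
  "adjoint_triple cnj sw nw \<Longrightarrow> adjoint_triple (\<lambda>y x. cnj x y) nw sw"
  unfolding adjoint_triple_def by blast

lemma no_zero_divisors_swap:
  "no_zero_divisors cnj \<Longrightarrow> no_zero_divisors (\<lambda>y x. cnj x y)"
  unfolding no_zero_divisors_def by blast

lemma adjoint_triple_cnj_bot_right:
  fixes cnj :: "'x::order \<Rightarrow> 'y::order_bot \<Rightarrow> 'z::order_bot"
  assumes "adjoint_triple cnj sw nw"
  shows "cnj x bot = bot"
proof -
  have "bot \<le> nw bot x" by simp
  then have "cnj x bot \<le> bot" using assms unfolding adjoint_triple_def by blast
  then show ?thesis by (rule bot_unique[THEN iffD1])
qed

lemma adjoint_triple_sw_top:
  fixes sw :: "'z::order_top \<Rightarrow> 'y::order \<Rightarrow> 'x::order_top"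
  assumes "adjoint_triple cnj sw nw"
  shows "sw top y = top"
  using assms unfolding adjoint_triple_def by (simp add: top_unique[symmetric])

lemma adjoint_triple_sw_bot:
  fixes sw :: "'z::order_bot \<Rightarrow> 'y::order_bot \<Rightarrow> 'x::{order_bot,order_top}"
  assumes adj: "adjoint_triple cnj sw nw" and nzd: "no_zero_divisors cnj"
  shows "sw bot y = (if y = bot then top else bot)"
proof (cases "y = bot")
  case True
  have "cnj top bot \<le> bot" using adjoint_triple_cnj_bot_right[OF adj] by simp
  then have "top \<le> sw bot bot" using adj unfolding adjoint_triple_def by blast
  with True show ?thesis by (simp add: top_unique)
next
  case False
  have "cnj (sw bot y) y \<le> bot" using adj unfolding adjoint_triple_def by blast
  then have "cnj (sw bot y) y = bot" by (rule bot_unique[THEN iffD1])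
  with False nzd show ?thesis unfolding no_zero_divisors_def by auto
qed

lemma adjoint_triple_sw_chi:
  fixes sw :: "'z::{order_bot,order_top} \<Rightarrow> 'y::order_bot \<Rightarrow> 'x::{order_bot,order_top}"
  assumes "adjoint_triple cnj sw nw" and "no_zero_divisors cnj"
  shows "sw (chi S u) y = (if y \<noteq> bot \<longrightarrow> u \<in> S then top else bot)"
  using adjoint_triple_sw_top[OF assms(1)] adjoint_triple_sw_bot[OF assms]
  by (simp add: chi_def)

lemma adjoint_triple_nw_chi:
  fixes nw :: "'z::{order_bot,order_top} \<Rightarrow> 'x::order_bot \<Rightarrow> 'y::{order_bot,order_top}"
  assumes "adjoint_triple cnj sw nw" and "no_zero_divisors cnj"
  shows "nw (chi S u) x = (if x \<noteq> bot \<longrightarrow> u \<in> S then top else bot)"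
  using adjoint_triple_sw_chi[OF adjoint_triple_swap no_zero_divisors_swap, OF assms] .

lemma INF_top_bot:
  "(INF x. if P x then top else bot :: 'l::complete_lattice) = (if \<forall>x. P x then top else bot)"
proof (cases "\<forall>x. P x")
  case False
  then obtain x where "\<not> P x" by blast
  then have "(INF x. if P x then top else bot :: 'l) \<le> bot"
    using INF_lower[of x UNIV "\<lambda>x. if P x then top else bot :: 'l"] by simp
  with False show ?thesis by (auto intro: bot_unique[THEN iffD1])
qed simp

lemma chi_eq_iff:
  assumes "(bot :: 'l::{order_bot,order_top}) \<noteq> top"
  shows "(chi S = (chi T :: 'x \<Rightarrow> 'l)) \<longleftrightarrow> S = T"
proof
  assume "chi S = (chi T :: 'x \<Rightarrow> 'l)"
  then have "(chi S x :: 'l) = chi T x" for x by simp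
  with assms show "S = T" unfolding chi_def by (metis set_eqI)
qed simp

lemma up_N_chi:
  assumes "\<And>a b. adjoint_triple (cnj_o (sigma_o a b)) (sw_o (sigma_o a b)) (nw_o (sigma_o a b))"
    and "\<And>a b. no_zero_divisors (cnj_o (sigma_o a b))"
  shows "up_N sw_o sigma_o R (chi X) = chi (crisp_up (boolean_context R) X)"
  unfolding up_N_def adjoint_triple_sw_chi[OF assms] INF_top_bot
  by (auto simp: chi_def crisp_up_def boolean_context_def)

lemma down_N_chi:
  assumes "\<And>a b. adjoint_triple (cnj_p (sigma_p a b)) (sw_p (sigma_p a b)) (nw_p (sigma_p a b))"
    and "\<And>a b. no_zero_divisors (cnj_p (sigma_p a b))"
  shows "down_N nw_p sigma_p R (chi Y) = chi (crisp_down (boolean_context R) Y)"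
  unfolding down_N_def adjoint_triple_nw_chi[OF assms] INF_top_bot
  by (auto simp: chi_def crisp_down_def boolean_context_def)

theorem mainTheorem4:
  fixes cnj :: "nat \<Rightarrow> 'a::complete_lattice \<Rightarrow> 'b::complete_lattice \<Rightarrow> 'c::{order_bot,order_top}"
    and sw :: "nat \<Rightarrow> 'c \<Rightarrow> 'b \<Rightarrow> 'a" and nw :: "nat \<Rightarrow> 'c \<Rightarrow> 'a \<Rightarrow> 'b"
    and cnj_p :: "nat \<Rightarrow> 'c \<Rightarrow> 'b \<Rightarrow> 'a"
    and sw_p :: "nat \<Rightarrow> 'a \<Rightarrow> 'b \<Rightarrow> 'c" and nw_p :: "nat \<Rightarrow> 'a \<Rightarrow> 'c \<Rightarrow> 'b"
    and cnj_o :: "nat \<Rightarrow> 'a \<Rightarrow> 'c \<Rightarrow> 'b"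
    and sw_o :: "nat \<Rightarrow> 'b \<Rightarrow> 'c \<Rightarrow> 'a" and nw_o :: "nat \<Rightarrow> 'b \<Rightarrow> 'a \<Rightarrow> 'c"
    and n m s :: nat
    and R :: "'o \<Rightarrow> 'p \<Rightarrow> 'c"
    and sigma sigma_p sigma_o :: "'o \<Rightarrow> 'p \<Rightarrow> nat"
    and X :: "'p set" and Y :: "'o set"
  assumes nontriv1: "(bot :: 'a) \<noteq> top"
    and nontriv2: "(bot :: 'b) \<noteq> top"
    and multi: "\<forall>i\<in>{1..n}. adjoint_triple (cnj i) (sw i) (nw i) \<and> no_zero_divisors (cnj i)"
    and propf: "\<forall>j\<in>{1..m}. adjoint_triple (cnj_p j) (sw_p j) (nw_p j) \<and> no_zero_divisors (cnj_p j)"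
    and obj: "\<forall>k\<in>{1..s}. adjoint_triple (cnj_o k) (sw_o k) (nw_o k) \<and> no_zero_divisors (cnj_o k)"
    and sigma_rng: "\<forall>a b. sigma a b \<in> {1..n}"
    and sigma_p_rng: "\<forall>a b. sigma_p a b \<in> {1..m}"
    and sigma_o_rng: "\<forall>a b. sigma_o a b \<in> {1..s}"
  shows "(chi X, chi Y) \<in> F_N sw_o sigma_o nw_p sigma_p R
     \<longleftrightarrow> (X, Y) \<in> C_N (boolean_context R)"
proof -
  have "up_N sw_o sigma_o R (chi X) = chi (crisp_up (boolean_context R) X)"
    using obj sigma_o_rng by (intro up_N_chi[where cnj_o = cnj_o and nw_o = nw_o]) blast+
  moreover have "down_N nw_p sigma_p R (chi Y) = chi (crisp_down (boolean_context R) Y)"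
    using propf sigma_p_rng by (intro down_N_chi[where cnj_p = cnj_p and sw_p = sw_p]) blast+
  ultimately show ?thesis
    by (simp add: F_N_def C_N_def chi_eq_iff[OF nontriv1] chi_eq_iff[OF nontriv2])
qed

end
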